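(* There exist absolute constants $A, C > 0$ such that for all integers $1 \le k \le d$, the Greedy algorithm (defined in the context), viewed as a map $c$ sending each finite point set $P \subset \mathbb{R}^d$ to its output $c(P)$, is an $\alpha$-composable core-set of size $k$ for the determinant maximization problem with parameter $k$, where $\alpha = A\cdot C^{k^2}$. That is, $|c(P)|\le k$ for every $P$, and for every integer $m \ge 1$ and all finite point sets $P_1,\dots,P_m \subset \mathbb{R}^d$, $$\mathrm{MAXDET}_k\Big(\bigcup_{i=1}^m c(P_i)\Big) \ge \frac{1}{\alpha}\,\mathrm{MAXDET}_k\Big(\bigcup_{i=1}^m P_i\Big).$$
   Context: For a finite set $S=\{v_1,\dots,v_k\}\subset\mathbb{R}^d$, let $M_S$ be the $k\times d$ matrix whose rows are the points of $S$; $\det(M_SM_S^\top)$ equals the square of the $k$-dimensional volume $\mathrm{VOL}(S)$ of the parallelepiped spanned by $S$. For a finite $P\subset\mathbb{R}^d$, $\mathrm{MAXDET}_k(P)=\max_{S\subseteq P,\,|S|=k}\det(M_SM_S^\top)$. For a set $C$ of points, $\langle C\rangle$ denotes its linear span, and $\mathrm{dist}(p,\mathcal{H})$ is the Euclidean distance from point $p$ to subspace $\mathcal{H}$. The Greedy algorithm on input $P$ and $k$: start with $\mathcal{C}=\emptyset$; for $k$ iterations, add to $\mathcal{C}$ a point $\arg\max_{p\in P}\mathrm{dist}(p,\langle\mathcal{C}\rangle)$; output $\mathcal{C}$. A map $c$ from point sets to subsets of themselves is an $\alpha$-composable core-set for determinant maximization if the displayed inequality holds for every collection $P_1,\dots,P_m$;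 it has size $t$ if $|c(P)|\le t$ for all $P$. *)

theory Defs
  imports "Jordan_Normal_Form.Determinant"
begin

text \<open>Points of R^d are vectors of dimension d (carrier_vec d).\<close>

definition lin_comb :: "nat \<Rightarrow> real list \<Rightarrow> real vec list \<Rightarrow> real vec" where
  "lin_comb d cs vs = foldr (\<lambda>(c, v) acc. c \<cdot>\<^sub>v v + acc) (zip cs vs) (0\<^sub>v d)"

definition lin_span :: "nat \<Rightarrow> real vec set \<Rightarrow> real vec set" where
  "lin_span d S = {lin_comb d cs vs | cs vs. set vs \<subseteq> S \<and> length cs = length vs}"

definition enorm :: "real vec \<Rightarrow> real" where
  "enorm v = sqrt (v \<bullet> v)"

definition dist_span :: "nat \<Rightarrow> real vec \<Rightarrow> real vec set \<Rightarrow> real" where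
  "dist_span d p S = Inf {enorm (p - w) | w. w \<in> lin_span d S}"

definition gram_det :: "nat \<Rightarrow> real vec list \<Rightarrow> real" where
  "gram_det d vs = det (mat_of_rows d vs * transpose_mat (mat_of_rows d vs))"

text \<open>MAXDET_k(P): maximum over k-subsets S of P (listed in any order, which does not
  affect the value); convention 0 if P has fewer than k points.\<close>
definition maxdet :: "nat \<Rightarrow> nat \<Rightarrow> real vec set \<Rightarrow> real" where
  "maxdet d k P =
     (if \<exists>vs. distinct vs \<and> set vs \<subseteq> P \<and> length vs = k
      then Max {gram_det d vs | vs. distinct vs \<and> set vs \<subseteq> P \<and> length vs = k}
      else 0)"

text \<open>All possible runs of Greedy (any tie-breaking) for n iterations, as the list of
  chosen points in order.\<close>
fun greedy_runs :: "nat \<Rightarrow> real vec set \<Rightarrow> nat \<Rightarrow> real vec list set" where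
  "greedy_runs d P 0 = {[]}"
| "greedy_runs d P (Suc n) =
     {cs @ [p] | cs p. cs \<in> greedy_runs d P n \<and> p \<in> P \<and>
        (\<forall>q\<in>P. dist_span d q (set cs) \<le> dist_span d p (set cs))}"

definition greedy_outputs :: "nat \<Rightarrow> nat \<Rightarrow> real vec set \<Rightarrow> real vec set set" where
  "greedy_outputs d k P = set ` greedy_runs d P k"

end

theory Submission
  imports Defs
begin

text \<open>Let S be a k-subset of the union with maximal Gram determinant. We replace the points of S
  one at a time by points of the core-sets, losing a factor of at most 4^(k+1) each time, hence
  at most (4^(k+1))^k <= 16^(k^2) in total.

  The Gram determinant of S is det(R) * dist(x, span R)^2, where x is the point being replaced and
  R consists of the other k - 1 points. If x lies in P, it suffices that some point c output by
  Greedy on P satisfies dist(x, span R) <= 2^(k+1) dist(c, span R). Let u_1, ..., u_k be the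
  Gram-Schmidt vectors of the greedy run. By the greedy choice their norms are nonincreasing and
  the residual of every point of P modulo the run is at most |u_k|. As more than |R| orthogonal
  vectors cannot all be close to span R, |u_k| is at most the sum s of the distances of the u_j to
  span R. Finally, replacing x by its residual modulo the run changes dist(x, span R) by at most s,
  and s <= (2^k - 1) max dist(c, span R) by induction along the run.\<close>

section \<open>Euclidean norm\<close>

lemma scalar_prod_self_nonneg: "0 \<le> (v::real vec) \<bullet> v"
  unfolding scalar_prod_def by (auto intro: sum_nonneg)

lemma scalar_prod_self_eq_0:
  assumes "(v::real vec) \<in> carrier_vec n" "v \<bullet> v = 0"
  shows "v = 0\<^sub>v n"
proof -
  have "\<forall>i\<in>{0..<dim_vec v}. v $ i * v $ i = 0"
    using assms(2) unfolding scalar_prod_def by (subst sum_nonneg_eq_0_iff[symmetric]) auto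
  then show ?thesis using assms(1) by (intro eq_vecI) auto
qed

lemma scalar_prod_Cauchy_Schwarz:
  assumes "(x::real vec) \<in> carrier_vec n" "y \<in> carrier_vec n"
  shows "(x \<bullet> y)\<^sup>2 \<le> (x \<bullet> x) * (y \<bullet> y)"
proof (cases "y \<bullet> y = 0")
  case True
  then show ?thesis using assms scalar_prod_self_eq_0[OF assms(2)] by simp
next
  case False
  then have yy: "y \<bullet> y > 0" using scalar_prod_self_nonneg[of y] by linarith
  define t where "t = (x \<bullet> y) / (y \<bullet> y)"
  have "0 \<le> (x - t \<cdot>\<^sub>v y) \<bullet> (x - t \<cdot>\<^sub>v y)" by (rule scalar_prod_self_nonneg)
  also have "\<dots> = x \<bullet> x - 2 * t * (x \<bullet> y) + t * t * (y \<bullet> y)"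
    using assms by (simp add: minus_scalar_prod_distrib[of _ n] scalar_prod_minus_distrib[of _ n]
        comm_scalar_prod[of y n x] algebra_simps)
  also have "\<dots> = x \<bullet> x - (x \<bullet> y)\<^sup>2 / (y \<bullet> y)"
    using yy unfolding t_def by (simp add: field_simps power2_eq_square)
  finally show ?thesis using yy by (simp add: field_simps)
qed

lemma enorm_nonneg: "0 \<le> enorm v"
  unfolding enorm_def by (simp add: scalar_prod_self_nonneg)

lemma enorm_power2: "(enorm v)\<^sup>2 = v \<bullet> v"
  unfolding enorm_def using scalar_prod_self_nonneg[of v] by simp

lemma enorm_zero [simp]: "enorm (0\<^sub>v n) = 0"
  unfolding enorm_def by simp

lemma enorm_eq_0:
  assumes "v \<in> carrier_vec n" "enorm v = 0"
  shows "v = 0\<^sub>v n"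
  using assms scalar_prod_self_eq_0 enorm_power2[of v] by simp

lemma abs_scalar_prod_le_enorm:
  assumes "(x::real vec) \<in> carrier_vec n" "y \<in> carrier_vec n"
  shows "\<bar>x \<bullet> y\<bar> \<le> enorm x * enorm y"
proof -
  have "(x \<bullet> y)\<^sup>2 \<le> (enorm x * enorm y)\<^sup>2"
    using scalar_prod_Cauchy_Schwarz[OF assms] by (simp add: power_mult_distrib enorm_power2)
  then have "\<bar>x \<bullet> y\<bar> \<le> \<bar>enorm x * enorm y\<bar>"
    by (simp only: abs_le_square_iff)
  then show ?thesis using enorm_nonneg[of x] enorm_nonneg[of y] by simp
qed

lemma enorm_add_le:
  assumes "(x::real vec) \<in> carrier_vec n" "y \<in> carrier_vec n"
  shows "enorm (x + y) \<le> enorm x + enorm y"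
proof (rule power2_le_imp_le)
  have "x \<bullet> y \<le> enorm x * enorm y"
    using abs_scalar_prod_le_enorm[OF assms] by linarith
  moreover have "(enorm (x + y))\<^sup>2 = x \<bullet> x + 2 * (x \<bullet> y) + y \<bullet> y"
    using assms by (simp add: enorm_power2 add_scalar_prod_distrib[of _ n]
        scalar_prod_add_distrib[of _ n] comm_scalar_prod[of y n x])
  ultimately show "(enorm (x + y))\<^sup>2 \<le> (enorm x + enorm y)\<^sup>2"
    by (simp add: power2_sum enorm_power2)
qed (simp add: enorm_nonneg add_nonneg_nonneg)

lemma enorm_smult: "enorm (a \<cdot>\<^sub>v (v::real vec)) = \<bar>a\<bar> * enorm v"
proof -
  have "(a \<cdot>\<^sub>v v) \<bullet> (a \<cdot>\<^sub>v v) = a\<^sup>2 * (v \<bullet> v)"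
    unfolding scalar_prod_def by (simp add: sum_distrib_left power2_eq_square algebra_simps)
  then show ?thesis unfolding enorm_def by (simp add: real_sqrt_mult)
qed

lemma abs_enorm_diff_smult_le:
  assumes "(x::real vec) \<in> carrier_vec n" "y \<in> carrier_vec n"
  shows "\<bar>enorm (x - t \<cdot>\<^sub>v y) - enorm x\<bar> \<le> \<bar>t\<bar> * enorm y"
proof -
  have "x - t \<cdot>\<^sub>v y = x + (- t) \<cdot>\<^sub>v y" "x = (x - t \<cdot>\<^sub>v y) + t \<cdot>\<^sub>v y"
    using assms by (auto intro!: eq_vecI)
  then show ?thesis
    using enorm_add_le[of x n "(- t) \<cdot>\<^sub>v y"] enorm_add_le[of "x - t \<cdot>\<^sub>v y" n "t \<cdot>\<^sub>v y"] assms
    by (simp add: enorm_smult abs_le_iff)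
qed

lemma abs_scalar_prod_div_le_1:
  assumes "(x::real vec) \<in> carrier_vec n" "u \<in> carrier_vec n" "enorm x \<le> enorm u"
  shows "\<bar>(x \<bullet> u) / (u \<bullet> u)\<bar> \<le> 1"
proof (cases "u \<bullet> u = 0")
  case False
  then have pos: "0 < u \<bullet> u" using scalar_prod_self_nonneg[of u] by linarith
  have "\<bar>x \<bullet> u\<bar> \<le> enorm x * enorm u" by (rule abs_scalar_prod_le_enorm[OF assms(1,2)])
  also have "\<dots> \<le> enorm u * enorm u" using assms(3) enorm_nonneg[of u] by (rule mult_right_mono)
  also have "\<dots> = u \<bullet> u" using enorm_power2[of u] by (simp add: power2_eq_square)
  finally show ?thesis using pos by (simp add: abs_divide)
qed simp

section \<open>Linear combinations and span\<close>

lemma lin_comb_Nil1 [simp]: "lin_comb d [] vs = 0\<^sub>v d"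
  unfolding lin_comb_def by simp

lemma lin_comb_Nil2 [simp]: "lin_comb d cs [] = 0\<^sub>v d"
  unfolding lin_comb_def by simp

lemma lin_comb_Cons [simp]: "lin_comb d (c # cs) (v # vs) = c \<cdot>\<^sub>v v + lin_comb d cs vs"
  unfolding lin_comb_def by simp

lemma lin_comb_carrier [simp]: "set vs \<subseteq> carrier_vec d \<Longrightarrow> lin_comb d cs vs \<in> carrier_vec d"
proof (induction vs arbitrary: cs)
  case (Cons v vs)
  then show ?case by (cases cs) auto
qed simp

lemma lin_comb_append:
  "length cs = length vs \<Longrightarrow> set vs \<subseteq> carrier_vec d \<Longrightarrow> set ws \<subseteq> carrier_vec d \<Longrightarrow>
   lin_comb d (cs @ bs) (vs @ ws) = lin_comb d cs vs + lin_comb d bs ws"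
proof (induction vs arbitrary: cs)
  case (Cons v vs)
  then show ?case by (cases cs) (auto simp: add.assoc)
qed simp

lemma smult_lin_comb:
  "set vs \<subseteq> carrier_vec d \<Longrightarrow> a \<cdot>\<^sub>v lin_comb d cs vs = lin_comb d (map ((*) a) cs) vs"
proof (induction vs arbitrary: cs)
  case (Cons v vs)
  then show ?case
    by (cases cs) (auto simp: smult_add_distrib_vec[of _ d] smult_smult_assoc)
qed (cases cs, auto)

lemma lin_comb_scalar_prod:
  "length cs = length vs \<Longrightarrow> set vs \<subseteq> carrier_vec d \<Longrightarrow> y \<in> carrier_vec d \<Longrightarrow>
   lin_comb d cs vs \<bullet> y = (\<Sum>j<length vs. cs ! j * (vs ! j \<bullet> y))"
proof (induction vs arbitrary: cs)
  case (Cons v vs)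
  then show ?case
    by (cases cs)
      (auto simp: add_scalar_prod_distrib[of _ d] sum.lessThan_Suc_shift simp del: sum.lessThan_Suc)
qed simp

lemma enorm_lin_comb_le:
  "length cs = length vs \<Longrightarrow> set vs \<subseteq> carrier_vec d \<Longrightarrow>
   enorm (lin_comb d cs vs) \<le> (\<Sum>j<length vs. \<bar>cs ! j\<bar> * enorm (vs ! j))"
proof (induction vs arbitrary: cs)
  case (Cons v vs)
  then obtain c cs' where cs: "cs = c # cs'" by (cases cs) auto
  have "enorm (lin_comb d cs (v # vs)) \<le> enorm (c \<cdot>\<^sub>v v) + enorm (lin_comb d cs' vs)"
    using Cons.prems cs by (auto intro!: enorm_add_le[of _ d])
  also have "enorm (lin_comb d cs' vs) \<le> (\<Sum>j<length vs. \<bar>cs' ! j\<bar> * enorm (vs ! j))"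
    using Cons cs by simp
  finally show ?case
    using cs by (simp add: sum.lessThan_Suc_shift enorm_smult del: sum.lessThan_Suc)
qed simp

lemma lin_span_carrier: "S \<subseteq> carrier_vec d \<Longrightarrow> w \<in> lin_span d S \<Longrightarrow> w \<in> carrier_vec d"
  unfolding lin_span_def by auto

lemma zero_in_lin_span: "0\<^sub>v d \<in> lin_span d S"
  unfolding lin_span_def by (auto intro!: exI[of _ "[]"])

lemma in_lin_span: "v \<in> S \<Longrightarrow> v \<in> carrier_vec d \<Longrightarrow> v \<in> lin_span d S"
  unfolding lin_span_def by (auto intro!: exI[of _ "[1]"] exI[of _ "[v]"])

lemma lin_span_mono: "S \<subseteq> T \<Longrightarrow> lin_span d S \<subseteq> lin_span d T"
  unfolding lin_span_def by blast

lemma lin_span_add: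
  assumes "S \<subseteq> carrier_vec d" "x \<in> lin_span d S" "y \<in> lin_span d S"
  shows "x + y \<in> lin_span d S"
proof -
  obtain cs vs where x: "x = lin_comb d cs vs" "set vs \<subseteq> S" "length cs = length vs"
    using assms(2) unfolding lin_span_def by auto
  obtain bs ws where y: "y = lin_comb d bs ws" "set ws \<subseteq> S" "length bs = length ws"
    using assms(3) unfolding lin_span_def by auto
  have "x + y = lin_comb d (cs @ bs) (vs @ ws)"
    using x y assms(1) by (subst lin_comb_append) auto
  then show ?thesis
    unfolding lin_span_def using x y by (auto intro!: exI[of _ "cs @ bs"] exI[of _ "vs @ ws"])
qed

lemma lin_span_smult:
  assumes "S \<subseteq> carrier_vec d" "x \<in> lin_span d S"
  shows "a \<cdot>\<^sub>v x \<in> lin_span d S"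
proof -
  obtain cs vs where x: "x = lin_comb d cs vs" "set vs \<subseteq> S" "length cs = length vs"
    using assms(2) unfolding lin_span_def by auto
  then have "a \<cdot>\<^sub>v x = lin_comb d (map ((*) a) cs) vs"
    using assms(1) smult_lin_comb[of vs d a cs] by auto
  then show ?thesis
    unfolding lin_span_def using x by (auto intro!: exI[of _ "map ((*) a) cs"] exI[of _ vs])
qed

lemma lin_span_diff:
  assumes "S \<subseteq> carrier_vec d" "x \<in> lin_span d S" "y \<in> lin_span d S"
  shows "x - y \<in> lin_span d S"
proof -
  have "x - y = x + (-1) \<cdot>\<^sub>v y"
    using lin_span_carrier[OF assms(1)] assms by (intro eq_vecI) auto
  then show ?thesis using lin_span_add[OF assms(1,2) lin_span_smult[OF assms(1,3)]] by simp
qed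

lemma lin_span_orthogonal:
  assumes "S \<subseteq> carrier_vec d" "y \<in> carrier_vec d" "\<forall>v\<in>S. v \<bullet> y = 0" "w \<in> lin_span d S"
  shows "w \<bullet> y = 0"
proof -
  obtain cs vs where w: "w = lin_comb d cs vs" "set vs \<subseteq> S" "length cs = length vs"
    using assms(4) unfolding lin_span_def by auto
  then show ?thesis
    using assms(1-3) by (auto simp: lin_comb_scalar_prod subset_iff)
qed

section \<open>Gram-Schmidt residuals\<close>

text \<open>\<open>residual cs x\<close> is x minus its orthogonal projection onto the span of cs, computed by
  Gram-Schmidt; the recursion runs over the reversed list so that the last vector is peeled off
  first. If the residual u of that vector is 0, the coefficient is 0 since division by 0 yields 0.\<close>
fun residual_rev :: "real vec list \<Rightarrow> real vec \<Rightarrow> real vec" where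
  "residual_rev [] x = x"
| "residual_rev (c # cs) x =
     (let u = residual_rev cs c; y = residual_rev cs x in y - ((y \<bullet> u) / (u \<bullet> u)) \<cdot>\<^sub>v u)"

definition residual :: "real vec list \<Rightarrow> real vec \<Rightarrow> real vec" where
  "residual cs x = residual_rev (rev cs) x"

lemma residual_Nil [simp]: "residual [] x = x"
  unfolding residual_def by simp

lemma residual_snoc:
  "residual (cs @ [c]) x =
     residual cs x - ((residual cs x \<bullet> residual cs c) / (residual cs c \<bullet> residual cs c)) \<cdot>\<^sub>v residual cs c"
  unfolding residual_def by (simp add: Let_def)

lemma residual_carrier [simp]:
  "set cs \<subseteq> carrier_vec d \<Longrightarrow> x \<in> carrier_vec d \<Longrightarrow> residual cs x \<in> carrier_vec d"
  by (induction cs arbitrary: x rule: rev_induct) (auto simp: residual_snoc)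

lemma residual_add:
  "set cs \<subseteq> carrier_vec d \<Longrightarrow> x \<in> carrier_vec d \<Longrightarrow> y \<in> carrier_vec d \<Longrightarrow>
   residual cs (x + y) = residual cs x + residual cs y"
proof (induction cs arbitrary: x y rule: rev_induct)
  case (snoc c cs)
  let ?u = "residual cs c"
  have carr: "?u \<in> carrier_vec d" "residual cs x \<in> carrier_vec d" "residual cs y \<in> carrier_vec d"
    using snoc.prems by auto
  then have "(residual cs x + residual cs y) \<bullet> ?u = residual cs x \<bullet> ?u + residual cs y \<bullet> ?u"
    by (simp add: add_scalar_prod_distrib)
  moreover have "residual cs (x + y) = residual cs x + residual cs y"
    using snoc by auto
  ultimately show ?case
    using carr[THEN carrier_vecD] unfolding residual_snoc
    by (intro eq_vecI) (auto simp: add_divide_distrib algebra_simps)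
qed simp

lemma residual_smult:
  "set cs \<subseteq> carrier_vec d \<Longrightarrow> x \<in> carrier_vec d \<Longrightarrow> residual cs (a \<cdot>\<^sub>v x) = a \<cdot>\<^sub>v residual cs x"
proof (induction cs arbitrary: x rule: rev_induct)
  case (snoc c cs)
  have "residual cs c \<in> carrier_vec d" "residual cs x \<in> carrier_vec d"
    using snoc.prems by auto
  moreover have "residual cs (a \<cdot>\<^sub>v x) = a \<cdot>\<^sub>v residual cs x"
    using snoc by auto
  ultimately show ?case
    unfolding residual_snoc by (intro eq_vecI) (auto simp: algebra_simps)
qed simp

lemma residual_diff_smult:
  assumes "set cs \<subseteq> carrier_vec d" "x \<in> carrier_vec d" "u \<in> carrier_vec d"
  shows "residual cs (x - t \<cdot>\<^sub>v u) = residual cs x - t \<cdot>\<^sub>v residual cs u"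
proof -
  have "x - t \<cdot>\<^sub>v u = x + (- t) \<cdot>\<^sub>v u" using assms by (intro eq_vecI) auto
  moreover have "residual cs x + (- t) \<cdot>\<^sub>v residual cs u = residual cs x - t \<cdot>\<^sub>v residual cs u"
    using residual_carrier[OF assms(1,2)] residual_carrier[OF assms(1,3)] by (intro eq_vecI) auto
  ultimately show ?thesis using assms by (simp add: residual_add residual_smult)
qed

lemma residual_lin_comb:
  "length cs = length vs \<Longrightarrow> set vs \<subseteq> carrier_vec d \<Longrightarrow> set R \<subseteq> carrier_vec d \<Longrightarrow>
   residual R (lin_comb d cs vs) = lin_comb d cs (map (residual R) vs)"
proof (induction vs arbitrary: cs)
  case Nil
  have "0\<^sub>v d = (0 :: real) \<cdot>\<^sub>v 0\<^sub>v d" by (intro eq_vecI) auto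
  then have "residual R (0\<^sub>v d) = residual R (0 \<cdot>\<^sub>v 0\<^sub>v d)" by simp
  also have "\<dots> = 0 \<cdot>\<^sub>v residual R (0\<^sub>v d)" using Nil by (intro residual_smult) auto
  also have "\<dots> = 0\<^sub>v d" using residual_carrier[OF Nil(3), of "0\<^sub>v d"] by auto
  finally show ?case using Nil by simp
next
  case (Cons v vs)
  then obtain c cs' where cs: "cs = c # cs'" by (cases cs) auto
  then show ?case
    using Cons by (simp add: residual_add residual_smult)
qed

lemma diff_residual_in_lin_span:
  "set cs \<subseteq> carrier_vec d \<Longrightarrow> x \<in> carrier_vec d \<Longrightarrow> x - residual cs x \<in> lin_span d (set cs)"
proof (induction cs arbitrary: x rule: rev_induct)
  case Nil
  then show ?case using zero_in_lin_span[of d] by (simp add: minus_cancel_vec)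
next
  case (snoc c cs)
  let ?S = "set (cs @ [c])" and ?u = "residual cs c" and ?y = "residual cs x"
  let ?t = "(?y \<bullet> ?u) / (?u \<bullet> ?u)"
  have S: "?S \<subseteq> carrier_vec d" and carr: "c \<in> carrier_vec d" "set cs \<subseteq> carrier_vec d"
    using snoc.prems by auto
  have mono: "lin_span d (set cs) \<subseteq> lin_span d ?S" by (rule lin_span_mono) auto
  have "c - (c - ?u) \<in> lin_span d ?S"
    using lin_span_diff[OF S in_lin_span[of c ?S d]] snoc.IH[OF carr(2,1)] carr mono by auto
  moreover have "c - (c - ?u) = ?u" using carr by (intro eq_vecI) auto
  ultimately have u: "?u \<in> lin_span d ?S" by simp
  have "x - residual (cs @ [c]) x = (x - ?y) + ?t \<cdot>\<^sub>v ?u"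
    using snoc.prems carr residual_carrier[OF carr(2) carr(1)] residual_carrier[OF carr(2) snoc.prems(2)]
    unfolding residual_snoc by (intro eq_vecI) (auto simp del: residual_carrier)
  then show ?case
    using lin_span_add[OF S] lin_span_smult[OF S u] snoc.IH[OF carr(2) snoc.prems(2)] mono by auto
qed

lemma residual_in_lin_span:
  assumes cs: "set cs \<subseteq> carrier_vec d" and x: "x \<in> carrier_vec d"
  shows "residual cs x \<in> lin_span d (insert x (set cs))"
proof -
  have T: "insert x (set cs) \<subseteq> carrier_vec d" using cs x by auto
  have "x - (x - residual cs x) \<in> lin_span d (insert x (set cs))"
    using lin_span_diff[OF T in_lin_span[OF _ x]] diff_residual_in_lin_span[OF cs x]
      lin_span_mono[of "set cs" "insert x (set cs)"] by blast
  moreover have "x - (x - residual cs x) = residual cs x"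
    using cs x by (intro eq_vecI) auto
  ultimately show ?thesis by simp
qed

lemma orthogonal_residual:
  "set cs \<subseteq> carrier_vec d \<Longrightarrow> x \<in> carrier_vec d \<Longrightarrow> v \<in> set cs \<Longrightarrow> v \<bullet> residual cs x = 0"
proof (induction cs arbitrary: x v rule: rev_induct)
  case (snoc c cs)
  let ?u = "residual cs c" and ?y = "residual cs x"
  define t where "t = (?y \<bullet> ?u) / (?u \<bullet> ?u)"
  define r where "r = residual (cs @ [c]) x"
  have carr: "c \<in> carrier_vec d" "set cs \<subseteq> carrier_vec d" "?u \<in> carrier_vec d" "?y \<in> carrier_vec d"
    using snoc.prems by auto
  have r: "r = ?y - t \<cdot>\<^sub>v ?u" "r \<in> carrier_vec d"
    unfolding r_def t_def residual_snoc using carr by auto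
  have orth_cs: "w \<bullet> r = 0" if w: "w \<in> set cs" for w
  proof -
    have "w \<in> carrier_vec d" using w carr by auto
    then show ?thesis
      using w carr snoc.prems snoc.IH[of x w] snoc.IH[of c w]
      by (simp add: r scalar_prod_minus_distrib[of _ d])
  qed
  have "?u \<bullet> r = 0"
  proof (cases "?u \<bullet> ?u = 0")
    case True
    then show ?thesis using scalar_prod_self_eq_0[OF carr(3)] r(2) by simp
  next
    case False
    then show ?thesis using carr comm_scalar_prod[OF carr(3,4)]
      by (simp add: r t_def scalar_prod_minus_distrib[of _ d])
  qed
  moreover have "(c - ?u) \<bullet> r = 0"
    using lin_span_orthogonal[OF carr(2) r(2) _ diff_residual_in_lin_span[OF carr(2,1)]] orth_cs
    by auto
  moreover have "c \<bullet> r = (c - ?u) \<bullet> r + ?u \<bullet> r"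
    using carr r(2) by (simp add: minus_scalar_prod_distrib[of _ d])
  ultimately show ?case using snoc.prems(3) orth_cs unfolding r_def by auto
qed simp

lemma lin_span_orthogonal_residual:
  "set cs \<subseteq> carrier_vec d \<Longrightarrow> x \<in> carrier_vec d \<Longrightarrow> w \<in> lin_span d (set cs) \<Longrightarrow>
   w \<bullet> residual cs x = 0"
  using lin_span_orthogonal[of "set cs" d "residual cs x" w] orthogonal_residual[of cs d x] by auto

lemma enorm_residual_le:
  assumes cs: "set cs \<subseteq> carrier_vec d" and x: "x \<in> carrier_vec d"
    and w: "w \<in> lin_span d (set cs)"
  shows "enorm (residual cs x) \<le> enorm (x - w)"
proof (rule power2_le_imp_le)
  let ?r = "residual cs x"
  define v where "v = (x - ?r) - w"
  have v: "v \<in> lin_span d (set cs)"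
    unfolding v_def using lin_span_diff[OF cs diff_residual_in_lin_span[OF cs x] w] .
  have carr: "?r \<in> carrier_vec d" "v \<in> carrier_vec d" "w \<in> carrier_vec d"
    using lin_span_carrier[OF cs] v w cs x by auto
  have "x - w = ?r + v" unfolding v_def using x carr by (intro eq_vecI) auto
  then have "(enorm (x - w))\<^sup>2 = ?r \<bullet> ?r + (?r \<bullet> v + v \<bullet> ?r) + v \<bullet> v"
    using carr by (simp add: enorm_power2 add_scalar_prod_distrib[of _ d] scalar_prod_add_distrib[of _ d])
  moreover have "?r \<bullet> v = 0" "v \<bullet> ?r = 0"
    using lin_span_orthogonal_residual[OF cs x v] comm_scalar_prod[of ?r d v] carr by auto
  ultimately show "(enorm ?r)\<^sup>2 \<le> (enorm (x - w))\<^sup>2"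
    using scalar_prod_self_nonneg[of v] by (simp add: enorm_power2)
qed (rule enorm_nonneg)

lemma dist_span_eq_enorm_residual:
  assumes cs: "set cs \<subseteq> carrier_vec d" and x: "x \<in> carrier_vec d"
  shows "dist_span d x (set cs) = enorm (residual cs x)"
  unfolding dist_span_def
proof (rule cInf_eq_minimum)
  have "x - (x - residual cs x) = residual cs x" using cs x by (intro eq_vecI) auto
  then show "enorm (residual cs x) \<in> {enorm (x - w) |w. w \<in> lin_span d (set cs)}"
    using diff_residual_in_lin_span[OF cs x] by force
qed (use enorm_residual_le[OF cs x] in auto)

lemma enorm_residual_le_enorm:
  "set cs \<subseteq> carrier_vec d \<Longrightarrow> x \<in> carrier_vec d \<Longrightarrow> enorm (residual cs x) \<le> enorm x"
proof -
  assume "set cs \<subseteq> carrier_vec d" "x \<in> carrier_vec d"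
  moreover have "x - 0\<^sub>v d = x" using \<open>x \<in> carrier_vec d\<close> by (intro eq_vecI) auto
  ultimately show ?thesis using enorm_residual_le[OF _ _ zero_in_lin_span] by metis
qed

lemma enorm_residual_append_le:
  assumes "set (cs @ bs) \<subseteq> carrier_vec d" "x \<in> carrier_vec d"
  shows "enorm (residual (cs @ bs) x) \<le> enorm (residual cs x)"
proof -
  have "x - residual cs x \<in> lin_span d (set (cs @ bs))"
    using diff_residual_in_lin_span[of cs d x] lin_span_mono[of "set cs" "set (cs @ bs)"] assms
    by auto
  then have "enorm (residual (cs @ bs) x) \<le> enorm (x - (x - residual cs x))"
    by (rule enorm_residual_le[OF assms])
  also have "x - (x - residual cs x) = residual cs x" using assms by (intro eq_vecI) auto
  finally show ?thesis .
qed

lemma residual_mem: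
  assumes "set cs \<subseteq> carrier_vec d" "x \<in> set cs"
  shows "residual cs x = 0\<^sub>v d"
proof -
  have x: "x \<in> carrier_vec d" using assms by auto
  have "enorm (residual cs x) \<le> enorm (x - x)"
    using enorm_residual_le[OF assms(1) x in_lin_span[OF assms(2) x]] .
  also have "x - x = 0\<^sub>v d" using x by (intro eq_vecI) auto
  finally show ?thesis using enorm_eq_0[of _ d] enorm_nonneg[of "residual cs x"] assms(1) x by simp
qed

lemma residual_orthogonal_id:
  assumes cs: "set cs \<subseteq> carrier_vec d" and x: "x \<in> carrier_vec d" and orth: "\<forall>v\<in>set cs. v \<bullet> x = 0"
  shows "residual cs x = x"
proof -
  let ?w = "x - residual cs x"
  have w: "?w \<in> lin_span d (set cs)" by (rule diff_residual_in_lin_span[OF cs x])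
  have carr: "?w \<in> carrier_vec d" "residual cs x \<in> carrier_vec d" using cs x by auto
  have "?w \<bullet> ?w = ?w \<bullet> x - ?w \<bullet> residual cs x"
    using carr x by (simp add: scalar_prod_minus_distrib[of _ d])
  also have "\<dots> = 0"
    using lin_span_orthogonal[OF cs x orth w] lin_span_orthogonal_residual[OF cs x w] by simp
  finally have "?w = 0\<^sub>v d" using scalar_prod_self_eq_0 carr by blast
  then have "\<forall>i<d. x $ i - residual cs x $ i = 0"
    using carr x by (metis carrier_vecD index_minus_vec(1) index_zero_vec(1))
  then show ?thesis using carr x by (intro eq_vecI) auto
qed

lemma exists_lin_comb_orthogonal:
  assumes U: "set U \<subseteq> carrier_vec d" and R: "set R \<subseteq> carrier_vec d"
    and len: "length R < length U"
  obtains cs where "length cs = length U" "\<exists>j<length U. cs ! j \<noteq> 0"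
    "\<forall>v\<in>set R. v \<bullet> lin_comb d cs U = 0"
proof -
  let ?n = "length U"
  \<comment> \<open>the equations for the coefficients, padded with zero rows to a square system\<close>
  define B where "B = mat ?n ?n (\<lambda>(i, j). if i < length R then R ! i \<bullet> U ! j else (0::real))"
  have B: "B \<in> carrier_mat ?n ?n" unfolding B_def by simp
  have "det B = (\<Sum>l<?n. B $$ (?n - 1, l) * cofactor B (?n - 1) l)"
    using len by (intro laplace_expansion_row[OF B]) auto
  also have "\<dots> = 0" unfolding B_def using len by (intro sum.neutral) auto
  finally obtain \<beta> where \<beta>: "\<beta> \<in> carrier_vec ?n" "\<beta> \<noteq> 0\<^sub>v ?n" "B *\<^sub>v \<beta> = 0\<^sub>v ?n"
    using det_0_iff_vec_prod_zero[OF B] by blast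
  define cs where "cs = map (\<lambda>j. \<beta> $ j) [0..<?n]"
  have cs: "length cs = ?n" "\<And>j. j < ?n \<Longrightarrow> cs ! j = \<beta> $ j" unfolding cs_def by auto
  show ?thesis
  proof (rule that[OF cs(1)])
    show "\<exists>j<?n. cs ! j \<noteq> 0" using \<beta>(1,2) cs(2) by (metis carrier_vecD eq_vecI index_zero_vec)
    show "\<forall>v\<in>set R. v \<bullet> lin_comb d cs U = 0"
    proof
      fix v assume "v \<in> set R"
      then obtain i where i: "i < length R" "R ! i = v" by (auto simp: in_set_conv_nth)
      have v: "v \<in> carrier_vec d" using i R by auto
      have dims: "dim_vec (U ! j) = d" if "j < ?n" for j
        using that U by (meson carrier_vecD nth_mem subsetD)
      have "lin_comb d cs U \<bullet> v = (\<Sum>j<?n. \<beta> $ j * (U ! j \<bullet> v))"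
        using lin_comb_scalar_prod[OF cs(1) U v] cs(2) by simp
      also have "\<dots> = (B *\<^sub>v \<beta>) $ i"
        using i len \<beta>(1) dims v unfolding B_def
        by (auto simp: scalar_prod_def atLeast0LessThan comm_scalar_prod[of v d] mult.commute
            intro!: sum.cong)
      also have "\<dots> = 0" using \<beta>(3) i len by simp
      finally show "v \<bullet> lin_comb d cs U = 0" using comm_scalar_prod[OF v] U by simp
    qed
  qed
qed

lemma abs_coeff_mult_enorm_le_enorm_lin_comb:
  assumes U: "set U \<subseteq> carrier_vec d" and cs: "length cs = length U" and l: "l < length U"
    and orth: "\<And>i j. i < length U \<Longrightarrow> j < length U \<Longrightarrow> i \<noteq> j \<Longrightarrow> U ! i \<bullet> U ! j = 0"
  shows "\<bar>cs ! l\<bar> * enorm (U ! l) \<le> enorm (lin_comb d cs U)"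
proof (cases "enorm (U ! l) = 0")
  case False
  let ?z = "lin_comb d cs U"
  have z: "?z \<in> carrier_vec d" and Ul: "U ! l \<in> carrier_vec d" using U l by auto
  have "?z \<bullet> U ! l = (\<Sum>j<length U. cs ! j * (U ! j \<bullet> U ! l))"
    by (rule lin_comb_scalar_prod[OF cs U Ul])
  also have "\<dots> = (\<Sum>j\<in>{l}. cs ! j * (U ! j \<bullet> U ! l))"
    by (rule sum.mono_neutral_right) (use l orth in auto)
  finally have "\<bar>cs ! l\<bar> * enorm (U ! l) * enorm (U ! l) = \<bar>?z \<bullet> U ! l\<bar>"
    by (simp add: abs_mult power2_eq_square[symmetric] enorm_power2 scalar_prod_self_nonneg)
  also have "\<dots> \<le> enorm ?z * enorm (U ! l)" by (rule abs_scalar_prod_le_enorm[OF z Ul])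
  finally show ?thesis using False enorm_nonneg[of "U ! l"] by simp
qed (simp add: enorm_nonneg)

text \<open>Some nonzero combination z of U is orthogonal to R, hence its own residual; compare its
  largest coefficient with the norm of z.\<close>
lemma sum_enorm_residual_orthogonal_ge:
  assumes U: "set U \<subseteq> carrier_vec d" and R: "set R \<subseteq> carrier_vec d"
    and len: "length R < length U"
    and orth: "\<And>i j. i < length U \<Longrightarrow> j < length U \<Longrightarrow> i \<noteq> j \<Longrightarrow> U ! i \<bullet> U ! j = 0"
    and long: "\<And>j. j < length U \<Longrightarrow> r \<le> enorm (U ! j)"
  shows "r \<le> (\<Sum>j<length U. enorm (residual R (U ! j)))"
proof -
  let ?n = "length U"
  obtain cs where cs: "length cs = ?n" "\<exists>j<?n. cs ! j \<noteq> 0" "\<forall>v\<in>set R. v \<bullet> lin_comb d cs U = 0"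
    using exists_lin_comb_orthogonal[OF U R len] by blast
  define z where "z = lin_comb d cs U"
  have z: "z \<in> carrier_vec d" unfolding z_def using U by simp
  define b where "b = Max ((\<lambda>j. \<bar>cs ! j\<bar>) ` {..<?n})"
  obtain l where l: "l < ?n" "\<bar>cs ! l\<bar> = b"
    using Max_in[of "(\<lambda>j. \<bar>cs ! j\<bar>) ` {..<?n}"] len unfolding b_def by fastforce
  have b_ge: "\<bar>cs ! j\<bar> \<le> b" if "j < ?n" for j unfolding b_def using that by (intro Max_ge) auto
  have "0 < b" using cs(2) b_ge by force
  have residuals: "set (map (residual R) U) \<subseteq> carrier_vec d" using U R by auto
  have "b * r \<le> b * enorm (U ! l)" using long[OF l(1)] \<open>0 < b\<close> by simp
  also have "\<dots> \<le> enorm z"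
    using abs_coeff_mult_enorm_le_enorm_lin_comb[OF U cs(1) l(1) orth] l(2) unfolding z_def by simp
  also have "z = lin_comb d cs (map (residual R) U)"
    using residual_orthogonal_id[OF R z] cs(3) residual_lin_comb[OF cs(1) U R] unfolding z_def
    by simp
  also have "enorm \<dots> \<le> (\<Sum>j<?n. \<bar>cs ! j\<bar> * enorm (residual R (U ! j)))"
    using enorm_lin_comb_le[OF _ residuals] cs(1) by simp
  also have "\<dots> \<le> (\<Sum>j<?n. b * enorm (residual R (U ! j)))"
    by (intro sum_mono mult_right_mono) (use b_ge enorm_nonneg in auto)
  finally show ?thesis using \<open>0 < b\<close> by (simp add: sum_distrib_left[symmetric])
qed

section \<open>Gram determinants\<close>

definition remove_nth :: "nat \<Rightarrow> 'a list \<Rightarrow> 'a list" where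
  "remove_nth j xs = take j xs @ drop (Suc j) xs"

lemma length_remove_nth [simp]: "j < length xs \<Longrightarrow> length (remove_nth j xs) = length xs - 1"
  unfolding remove_nth_def by simp

lemma nth_remove_nth:
  "j < length xs \<Longrightarrow> i < length xs - 1 \<Longrightarrow> remove_nth j xs ! i = xs ! (if i < j then i else Suc i)"
  unfolding remove_nth_def by (auto simp: nth_append min_def)

lemma set_remove_nth_subset: "set (remove_nth j xs) \<subseteq> set xs"
  unfolding remove_nth_def by (auto dest: in_set_takeD in_set_dropD)

lemma remove_nth_snoc [simp]: "remove_nth (length xs) (xs @ [x]) = xs"
  unfolding remove_nth_def by simp

lemma nth_in_set_remove_nth: "i < length xs \<Longrightarrow> i \<noteq> j \<Longrightarrow> xs ! i \<in> set (remove_nth j xs)"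
proof (cases "i < j")
  case True
  assume "i < length xs"
  then show ?thesis using True unfolding remove_nth_def by (simp add: in_set_conv_nth) (metis nth_take)
next
  case False
  assume "i < length xs" "i \<noteq> j"
  then have "xs ! i = drop (Suc j) xs ! (i - Suc j)" "i - Suc j < length (drop (Suc j) xs)"
    using False by auto
  then show ?thesis unfolding remove_nth_def by (metis UnCI nth_mem set_append)
qed

lemma in_set_remove_nthE:
  assumes "j < length xs" "v \<in> set (remove_nth j xs)"
  obtains i where "i < length xs" "i \<noteq> j" "xs ! i = v"
proof -
  obtain i where i: "i < length xs - 1" "remove_nth j xs ! i = v"
    using assms by (auto simp: in_set_conv_nth)
  show ?thesis
  proof (rule that)
    show "(if i < j then i else Suc i) < length xs" "(if i < j then i else Suc i) \<noteq> j"
      using i(1) by auto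
    show "xs ! (if i < j then i else Suc i) = v" using i nth_remove_nth[OF assms(1) i(1)] by simp
  qed
qed

lemma gram_det_eq_det_scalar_prods:
  "set vs \<subseteq> carrier_vec d \<Longrightarrow>
   gram_det d vs = det (mat (length vs) (length vs) (\<lambda>(i, j). vs ! i \<bullet> vs ! j))"
  unfolding gram_det_def
  by (rule arg_cong[of _ _ det], intro eq_matI) (auto simp: nth_mem subset_iff)

lemma gram_det_Nil [simp]: "gram_det d [] = 1"
  unfolding gram_det_def det_def by simp

lemma gram_det_update_add_smult:
  assumes S: "set S \<subseteq> carrier_vec d" and ij: "i < length S" "j < length S" "i \<noteq> j"
    and y: "y \<in> carrier_vec d"
  shows "gram_det d (S[j := y + c \<cdot>\<^sub>v S ! i]) = gram_det d (S[j := y])"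
proof -
  let ?n = "length S"
  define M where "M = mat_of_rows d (S[j := y])"
  define E where "E = (addrow_mat ?n c j i :: real mat)"
  have M: "M \<in> carrier_mat ?n d" unfolding M_def by (metis length_list_update mat_of_rows_carrier(1))
  have E: "E \<in> carrier_mat ?n ?n" unfolding E_def by simp
  have "S ! i \<in> carrier_vec d" using S ij by auto
  then have "mat_of_rows d (S[j := y + c \<cdot>\<^sub>v S ! i]) = addrow c j i M"
    unfolding M_def using ij y by (intro eq_matI) (auto simp: mat_of_rows_index nth_list_update)
  also have "\<dots> = E * M" unfolding E_def using addrow_mat[OF M ij(1)] .
  finally have eq: "mat_of_rows d (S[j := y + c \<cdot>\<^sub>v S ! i]) = E * M" .
  have Mt: "transpose_mat M \<in> carrier_mat d ?n" and Et: "transpose_mat E \<in> carrier_mat ?n ?n"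
    using M E by auto
  have "(E * M) * transpose_mat (E * M) = E * M * (transpose_mat M * transpose_mat E)"
    by (simp add: transpose_mult[OF E M])
  also have "\<dots> = E * (M * (transpose_mat M * transpose_mat E))"
    using Mt Et by (intro assoc_mult_mat[OF E M]) auto
  also have "M * (transpose_mat M * transpose_mat E) = M * transpose_mat M * transpose_mat E"
    by (rule assoc_mult_mat[symmetric, OF M Mt Et])
  also have "E * (M * transpose_mat M * transpose_mat E) = E * (M * transpose_mat M) * transpose_mat E"
    using M Mt by (intro assoc_mult_mat[symmetric, OF E _ Et]) auto
  finally have "(E * M) * transpose_mat (E * M) = E * (M * transpose_mat M) * transpose_mat E" .
  then have "gram_det d (S[j := y + c \<cdot>\<^sub>v S ! i]) =
      det E * det (M * transpose_mat M) * det (transpose_mat E)"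
    unfolding gram_det_def eq using E M by (simp add: det_mult[of _ ?n])
  also have "\<dots> = det (M * transpose_mat M)"
    using det_transpose[OF E] det_addrow_mat[of j i ?n c] ij unfolding E_def by simp
  finally show ?thesis unfolding gram_det_def M_def .
qed

lemma gram_det_update_add_lin_comb:
  assumes S: "set S \<subseteq> carrier_vec d" and j: "j < length S"
  shows "set vs \<subseteq> set (remove_nth j S) \<Longrightarrow> y \<in> carrier_vec d \<Longrightarrow>
    gram_det d (S[j := y + lin_comb d cs vs]) = gram_det d (S[j := y])"
proof (induction vs arbitrary: cs y)
  case Nil
  then show ?case by simp
next
  case (Cons v vs)
  show ?case
  proof (cases cs)
    case Nil
    with Cons.prems show ?thesis by simp
  next
    case (Cons c cs')
    obtain i where i: "i < length S" "i \<noteq> j" "S ! i = v"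
      using in_set_remove_nthE[OF j] Cons.prems by auto
    have carr: "v \<in> carrier_vec d" "set vs \<subseteq> carrier_vec d" "lin_comb d cs' vs \<in> carrier_vec d"
      using Cons.prems S set_remove_nth_subset[of j S] by auto
    have "y + lin_comb d cs (v # vs) = (y + lin_comb d cs' vs) + c \<cdot>\<^sub>v S ! i"
      using Cons i carr(1,3)[THEN carrier_vecD] Cons.prems(2)[THEN carrier_vecD] by (intro eq_vecI) auto
    then have "gram_det d (S[j := y + lin_comb d cs (v # vs)]) =
        gram_det d (S[j := y + lin_comb d cs' vs])"
      using gram_det_update_add_smult[OF S i(1) j i(2), of "y + lin_comb d cs' vs" c] Cons.prems carr
      by simp
    also have "\<dots> = gram_det d (S[j := y])" using Cons.IH Cons.prems by auto
    finally show ?thesis .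
  qed
qed

lemma gram_det_update_add_lin_span:
  assumes "set S \<subseteq> carrier_vec d" "j < length S" "y \<in> carrier_vec d"
    and "w \<in> lin_span d (set (remove_nth j S))"
  shows "gram_det d (S[j := y + w]) = gram_det d (S[j := y])"
  using assms(4) gram_det_update_add_lin_comb[OF assms(1-2) _ assms(3)] unfolding lin_span_def by auto

lemma gram_det_update_orthogonal:
  assumes S: "set S \<subseteq> carrier_vec d" and j: "j < length S" and e: "e \<in> carrier_vec d"
    and orth: "\<forall>v\<in>set (remove_nth j S). v \<bullet> e = 0"
  shows "gram_det d (S[j := e]) = gram_det d (remove_nth j S) * (e \<bullet> e)"
proof -
  let ?n = "length S" and ?T = "S[j := e]" and ?R = "remove_nth j S"
  define A where "A = mat ?n ?n (\<lambda>(a, b). ?T ! a \<bullet> ?T ! b)"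
  have T: "set ?T \<subseteq> carrier_vec d" using S e by (meson set_update_subsetI)
  have R: "set ?R \<subseteq> carrier_vec d" using S set_remove_nth_subset[of j S] by auto
  have A: "A \<in> carrier_mat ?n ?n" unfolding A_def by simp
  have row_j: "A $$ (j, l) = 0" if l: "l < ?n" "l \<noteq> j" for l
  proof -
    have "S ! l \<in> set ?R" using nth_in_set_remove_nth l by blast
    then show ?thesis
      unfolding A_def using l j orth comm_scalar_prod[OF e] R by auto
  qed
  have "det A = (\<Sum>l<?n. A $$ (j, l) * cofactor A j l)" by (rule laplace_expansion_row[OF A j])
  also have "\<dots> = A $$ (j, j) * cofactor A j j"
    by (rule sum.mono_neutral_right[of "{..<?n}" "{j}", simplified]) (use j row_j in auto)
  also have "cofactor A j j = det (mat_delete A j j)"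
    unfolding cofactor_def by (simp add: mult_2[symmetric])
  also have "mat_delete A j j = mat (?n - 1) (?n - 1) (\<lambda>(a, b). ?R ! a \<bullet> ?R ! b)"
    unfolding mat_delete_def A_def using j
    by (intro eq_matI) (auto simp: nth_remove_nth nth_list_update)
  also have "det \<dots> = gram_det d ?R" using gram_det_eq_det_scalar_prods[OF R] j by simp
  finally show ?thesis
    using gram_det_eq_det_scalar_prods[OF T] j unfolding A_def by simp
qed

theorem gram_det_update:
  assumes S: "set S \<subseteq> carrier_vec d" and j: "j < length S" and x: "x \<in> carrier_vec d"
  shows "gram_det d (S[j := x]) = gram_det d (remove_nth j S) * (enorm (residual (remove_nth j S) x))\<^sup>2"
proof -
  let ?R = "remove_nth j S"
  have R: "set ?R \<subseteq> carrier_vec d" using S set_remove_nth_subset[of j S] by auto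
  have r: "residual ?R x \<in> carrier_vec d" using R x by simp
  have "residual ?R x + (x - residual ?R x) = x" using r x by (intro eq_vecI) auto
  then have "gram_det d (S[j := x]) = gram_det d (S[j := residual ?R x + (x - residual ?R x)])"
    by simp
  also have "\<dots> = gram_det d (S[j := residual ?R x])"
    by (rule gram_det_update_add_lin_span[OF S j r diff_residual_in_lin_span[OF R x]])
  also have "\<dots> = gram_det d ?R * (residual ?R x \<bullet> residual ?R x)"
    by (rule gram_det_update_orthogonal[OF S j r]) (use orthogonal_residual[OF R x] in auto)
  finally show ?thesis by (simp add: enorm_power2)
qed

lemma gram_det_snoc:
  "set (S @ [x]) \<subseteq> carrier_vec d \<Longrightarrow> gram_det d (S @ [x]) = gram_det d S * (enorm (residual S x))\<^sup>2"
  using gram_det_update[of "S @ [x]" d "length S" x] by simp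

lemma gram_det_nonneg: "set S \<subseteq> carrier_vec d \<Longrightarrow> 0 \<le> gram_det d S"
  by (induction S rule: rev_induct) (auto simp: gram_det_snoc)

lemma distinct_if_gram_det_pos:
  assumes S: "set S \<subseteq> carrier_vec d" and pos: "0 < gram_det d S"
  shows "distinct S"
proof (rule ccontr)
  assume "\<not> distinct S"
  then obtain i j where ij: "i < length S" "j < length S" "i \<noteq> j" "S ! i = S ! j"
    by (auto simp: distinct_conv_nth)
  let ?R = "remove_nth j S"
  have R: "set ?R \<subseteq> carrier_vec d" using S set_remove_nth_subset[of j S] by auto
  have "S ! j \<in> set ?R" using nth_in_set_remove_nth[OF ij(1,3)] ij(4) by simp
  then have "residual ?R (S ! j) = 0\<^sub>v d" by (rule residual_mem[OF R])
  moreover have "S ! j \<in> carrier_vec d" using S ij(2) by auto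
  ultimately have "gram_det d (S[j := S ! j]) = 0"
    using gram_det_update[OF S ij(2), of "S ! j"] by simp
  then show False using pos by simp
qed

section \<open>Greedy runs\<close>

lemma greedy_runs_length_set: "cs \<in> greedy_runs d P n \<Longrightarrow> length cs = n \<and> set cs \<subseteq> P"
proof (induction n arbitrary: cs)
  case (Suc n)
  then show ?case by force
qed simp

lemma take_greedy_runs: "cs \<in> greedy_runs d P n \<Longrightarrow> j \<le> n \<Longrightarrow> take j cs \<in> greedy_runs d P j"
proof (induction n arbitrary: cs)
  case (Suc n)
  then obtain cs' c where cs: "cs = cs' @ [c]" "cs' \<in> greedy_runs d P n" by auto
  show ?case
  proof (cases "j \<le> n")
    case True
    then show ?thesis using Suc.IH[OF cs(2) True] cs greedy_runs_length_set[OF cs(2)] by simp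
  next
    case False
    then have "j = Suc n" using Suc.prems by simp
    then show ?thesis using greedy_runs_length_set[OF Suc.prems(1)] Suc.prems by simp
  qed
qed simp

lemma enorm_residual_le_greedy_choice:
  assumes P: "P \<subseteq> carrier_vec d" and cs: "cs \<in> greedy_runs d P n"
    and j: "j < n" and q: "q \<in> P"
  shows "enorm (residual (take j cs) q) \<le> enorm (residual (take j cs) (cs ! j))"
proof -
  have len: "length cs = n" "set cs \<subseteq> P" using greedy_runs_length_set[OF cs] by auto
  have "take (Suc j) cs = take j cs @ [cs ! j]" using j len by (simp add: take_Suc_conv_app_nth)
  then have "take j cs @ [cs ! j] \<in> greedy_runs d P (Suc j)"
    using take_greedy_runs[OF cs, of "Suc j"] j by simp
  then have "dist_span d q (set (take j cs)) \<le> dist_span d (cs ! j) (set (take j cs))"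
    using q by auto
  moreover have "cs ! j \<in> P" using len j by auto
  then have "set (take j cs) \<subseteq> carrier_vec d" "cs ! j \<in> carrier_vec d" "q \<in> carrier_vec d"
    using len P q by (auto dest: in_set_takeD)
  ultimately show ?thesis by (simp add: dist_span_eq_enorm_residual)
qed

definition gram_schmidt_vecs :: "real vec list \<Rightarrow> real vec list" where
  "gram_schmidt_vecs cs = map (\<lambda>j. residual (take j cs) (cs ! j)) [0..<length cs]"

lemma gram_schmidt_vecs_Nil [simp]: "gram_schmidt_vecs [] = []"
  unfolding gram_schmidt_vecs_def by simp

lemma length_gram_schmidt_vecs [simp]: "length (gram_schmidt_vecs cs) = length cs"
  unfolding gram_schmidt_vecs_def by simp

lemma nth_gram_schmidt_vecs [simp]:
  "j < length cs \<Longrightarrow> gram_schmidt_vecs cs ! j = residual (take j cs) (cs ! j)"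
  unfolding gram_schmidt_vecs_def by simp

lemma gram_schmidt_vecs_snoc [simp]:
  "gram_schmidt_vecs (cs @ [c]) = gram_schmidt_vecs cs @ [residual cs c]"
  unfolding gram_schmidt_vecs_def by (auto simp: nth_append)

lemma gram_schmidt_vecs_carrier:
  assumes "set cs \<subseteq> carrier_vec d"
  shows "set (gram_schmidt_vecs cs) \<subseteq> carrier_vec d"
proof -
  have "residual (take j cs) (cs ! j) \<in> carrier_vec d" if "j < length cs" for j
    using assms that nth_mem[of j cs] by (intro residual_carrier) (auto dest: in_set_takeD)
  then show ?thesis unfolding gram_schmidt_vecs_def by auto
qed

lemma gram_schmidt_vecs_orthogonal:
  assumes cs: "set cs \<subseteq> carrier_vec d" and ij: "i < length cs" "j < length cs" "i \<noteq> j"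
  shows "gram_schmidt_vecs cs ! i \<bullet> gram_schmidt_vecs cs ! j = 0"
proof -
  have orth: "gram_schmidt_vecs cs ! i \<bullet> gram_schmidt_vecs cs ! j = 0"
    if "i < j" "j < length cs" for i j
  proof -
    have take: "set (take k cs) \<subseteq> carrier_vec d" for k using cs by (auto dest: in_set_takeD)
    have "cs ! i \<in> set (take j cs)"
      using that nth_mem[of i "take j cs"] by simp
    then have "insert (cs ! i) (set (take i cs)) \<subseteq> set (take j cs)"
      using set_take_subset_set_take[of i j cs] that by simp
    then have "lin_span d (insert (cs ! i) (set (take i cs))) \<subseteq> lin_span d (set (take j cs))"
      by (rule lin_span_mono)
    moreover have "cs ! i \<in> carrier_vec d" using cs that by auto
    ultimately have "gram_schmidt_vecs cs ! i \<in> lin_span d (set (take j cs))"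
      using residual_in_lin_span[OF take, of "cs ! i" i] that by auto
    moreover have "cs ! j \<in> carrier_vec d" using cs that by auto
    ultimately show ?thesis using lin_span_orthogonal_residual[OF take] that by auto
  qed
  show ?thesis
  proof (cases "i < j")
    case False
    then have "gram_schmidt_vecs cs ! j \<bullet> gram_schmidt_vecs cs ! i = 0" using orth ij by simp
    moreover have "gram_schmidt_vecs cs ! i \<in> carrier_vec d"
        "gram_schmidt_vecs cs ! j \<in> carrier_vec d"
      using gram_schmidt_vecs_carrier[OF cs] ij by (metis length_gram_schmidt_vecs nth_mem subsetD)+
    ultimately show ?thesis using comm_scalar_prod by metis
  qed (use orth ij in auto)
qed

lemma enorm_residual_take_greedy_le:
  assumes P: "P \<subseteq> carrier_vec d" and cs: "cs \<in> greedy_runs d P n"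
    and j: "j < n" "j \<le> m" "m \<le> n" and p: "p \<in> P"
  shows "enorm (residual (take m cs) p) \<le> enorm (gram_schmidt_vecs cs ! j)"
proof -
  have len: "length cs = n" "set cs \<subseteq> P" using greedy_runs_length_set[OF cs] by auto
  have "take m cs = take j cs @ take (m - j) (drop j cs)"
    using j by (metis le_add_diff_inverse take_add)
  moreover have "set (take m cs) \<subseteq> carrier_vec d" "p \<in> carrier_vec d"
    using len P p by (auto dest: in_set_takeD)
  ultimately have "enorm (residual (take m cs) p) \<le> enorm (residual (take j cs) p)"
    using enorm_residual_append_le[of "take j cs" "take (m - j) (drop j cs)" d p] by simp
  also have "\<dots> \<le> enorm (residual (take j cs) (cs ! j))"
    by (rule enorm_residual_le_greedy_choice[OF P cs j(1) p])
  finally show ?thesis using j len by simp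
qed

lemma greedy_residual_snoc:
  assumes P: "P \<subseteq> carrier_vec d" and cs: "cs @ [c] \<in> greedy_runs d P (Suc n)" and x: "x \<in> P"
  obtains t where "\<bar>t\<bar> \<le> 1" "residual (cs @ [c]) x = residual cs x - t \<cdot>\<^sub>v residual cs c"
proof -
  have "enorm (residual cs x) \<le> enorm (residual cs c)"
    using enorm_residual_le_greedy_choice[OF P cs, of n x] greedy_runs_length_set[OF cs] x by auto
  moreover have "residual cs x \<in> carrier_vec d" "residual cs c \<in> carrier_vec d"
    using greedy_runs_length_set[OF cs] P x by (auto intro!: residual_carrier)
  ultimately show ?thesis
    using that[OF abs_scalar_prod_div_le_1] residual_snoc[of cs c x] by simp
qed

lemma abs_enorm_residual_greedy_diff_le:
  assumes P: "P \<subseteq> carrier_vec d" and R: "set R \<subseteq> carrier_vec d"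
  shows "cs \<in> greedy_runs d P n \<Longrightarrow> x \<in> P \<Longrightarrow>
    \<bar>enorm (residual R (residual cs x)) - enorm (residual R x)\<bar> \<le>
      (\<Sum>u\<leftarrow>gram_schmidt_vecs cs. enorm (residual R u))"
proof (induction n arbitrary: cs)
  case (Suc n)
  then obtain cs' c where cs: "cs = cs' @ [c]" "cs' \<in> greedy_runs d P n" "c \<in> P" by auto
  obtain t where t: "\<bar>t\<bar> \<le> 1" "residual cs x = residual cs' x - t \<cdot>\<^sub>v residual cs' c"
    using greedy_residual_snoc[OF P _ Suc.prems(2)] Suc.prems(1) cs(1) by metis
  let ?a = "residual R (residual cs' x)" and ?b = "residual R (residual cs' c)"
  have cs': "set cs' \<subseteq> carrier_vec d" using greedy_runs_length_set[OF cs(2)] P by auto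
  have carr: "residual cs' x \<in> carrier_vec d" "residual cs' c \<in> carrier_vec d"
    using cs' cs(3) Suc.prems(2) P by auto
  then have "residual R (residual cs x) = ?a - t \<cdot>\<^sub>v ?b"
    using t(2) residual_diff_smult[OF R] by simp
  then have "\<bar>enorm (residual R (residual cs x)) - enorm ?a\<bar> \<le> \<bar>t\<bar> * enorm ?b"
    using abs_enorm_diff_smult_le[of ?a d ?b t] carr R by simp
  also have "\<dots> \<le> enorm ?b" using t(1) enorm_nonneg[of ?b] by (simp add: mult_left_le_one_le)
  finally show ?case using Suc.IH[OF cs(2) Suc.prems(2)] cs(1) by simp
qed simp

lemma sum_enorm_residual_gram_schmidt_le:
  assumes P: "P \<subseteq> carrier_vec d" and R: "set R \<subseteq> carrier_vec d"
  shows "cs \<in> greedy_runs d P n \<Longrightarrow> \<forall>c\<in>set cs. enorm (residual R c) \<le> M \<Longrightarrow>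
    (\<Sum>u\<leftarrow>gram_schmidt_vecs cs. enorm (residual R u)) \<le> (2 ^ n - 1) * M"
proof (induction n arbitrary: cs)
  case (Suc n)
  then obtain cs' c where cs: "cs = cs' @ [c]" "cs' \<in> greedy_runs d P n" "c \<in> P" by auto
  let ?S = "\<Sum>u\<leftarrow>gram_schmidt_vecs cs'. enorm (residual R u)"
  have "?S \<le> (2 ^ n - 1) * M" using Suc cs by simp
  moreover have "enorm (residual R (residual cs' c)) \<le> enorm (residual R c) + ?S"
    using abs_enorm_residual_greedy_diff_le[OF P R cs(2,3)] by linarith
  moreover have "enorm (residual R c) \<le> M" using Suc.prems(2) cs(1) by simp
  ultimately show ?case using cs(1) by (simp add: algebra_simps)
qed simp

theorem greedy_residual_bound:
  assumes P: "P \<subseteq> carrier_vec d" and cs: "cs \<in> greedy_runs d P n"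
    and R: "set R \<subseteq> carrier_vec d" "length R < n" and p: "p \<in> P"
    and M: "\<forall>c\<in>set cs. enorm (residual R c) \<le> M"
  shows "enorm (residual R p) \<le> 2 ^ (n + 1) * M"
proof -
  let ?U = "gram_schmidt_vecs cs"
  let ?S = "\<Sum>u\<leftarrow>?U. enorm (residual R u)"
  have len: "length cs = n" "set cs \<subseteq> P" using greedy_runs_length_set[OF cs] by auto
  have cs_carr: "set cs \<subseteq> carrier_vec d" using len P by auto
  have "n \<noteq> 0" using R(2) by simp
  define r where "r = enorm (?U ! (n - 1))"
  have "r \<le> (\<Sum>j<length ?U. enorm (residual R (?U ! j)))"
  proof (rule sum_enorm_residual_orthogonal_ge[OF gram_schmidt_vecs_carrier[OF cs_carr] R(1)])
    show "length R < length ?U" using R(2) len by simp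
    show "?U ! i \<bullet> ?U ! j = 0" if "i < length ?U" "j < length ?U" "i \<noteq> j" for i j
      using gram_schmidt_vecs_orthogonal[OF cs_carr] that by simp
    show "r \<le> enorm (?U ! j)" if "j < length ?U" for j
    proof -
      have "cs ! (n - 1) \<in> P" using len \<open>n \<noteq> 0\<close> by auto
      then show ?thesis
        using enorm_residual_take_greedy_le[OF P cs, of j "n - 1"] that len \<open>n \<noteq> 0\<close>
        unfolding r_def by simp
    qed
  qed
  also have "\<dots> = ?S" by (simp add: sum_list_sum_nth atLeast0LessThan)
  finally have "r \<le> ?S" .
  have "enorm (residual cs p) \<le> r"
    using enorm_residual_take_greedy_le[OF P cs, of "n - 1" n p] p len \<open>n \<noteq> 0\<close> unfolding r_def
    by simp
  moreover have "enorm (residual R (residual cs p)) \<le> enorm (residual cs p)"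
    using enorm_residual_le_enorm R(1) cs_carr p P by auto
  moreover have "?S \<le> (2 ^ n - 1) * M"
    by (rule sum_enorm_residual_gram_schmidt_le[OF P R(1) cs M])
  moreover have "0 \<le> M" using M len \<open>n \<noteq> 0\<close> enorm_nonneg
    by (metis length_0_conv list.set_intros(1) neq_Nil_conv order_trans)
  ultimately show ?thesis
    using abs_enorm_residual_greedy_diff_le[OF P R(1) cs p] \<open>r \<le> ?S\<close> by (simp add: algebra_simps)
qed

section \<open>Exchanging points of an optimal subset\<close>

lemma greedy_exchange:
  assumes P: "P \<subseteq> carrier_vec d" and cs: "cs \<in> greedy_runs d P k"
    and S: "set S \<subseteq> carrier_vec d" "length S = k" and j: "j < k" and Sj: "S ! j \<in> P"
  obtains c where "c \<in> set cs" "gram_det d S \<le> 4 ^ (k + 1) * gram_det d (S[j := c])"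
proof -
  let ?R = "remove_nth j S"
  let ?h = "\<lambda>x. enorm (residual ?R x)"
  have len: "length cs = k" "set cs \<subseteq> P" using greedy_runs_length_set[OF cs] by auto
  have R: "set ?R \<subseteq> carrier_vec d" using S set_remove_nth_subset[of j S] by auto
  have "set cs \<noteq> {}" using len j by auto
  then have "Max (?h ` set cs) \<in> ?h ` set cs" by (intro Max_in) auto
  then obtain c where c: "c \<in> set cs" "?h c = Max (?h ` set cs)" by auto
  then have max: "\<forall>c'\<in>set cs. ?h c' \<le> ?h c" by simp
  have carr: "c \<in> carrier_vec d" "S ! j \<in> carrier_vec d" using c(1) len P Sj by auto
  have "?h (S ! j) \<le> 2 ^ (k + 1) * ?h c"
    using greedy_residual_bound[OF P cs R _ Sj max] S(2) j by simp
  then have "(?h (S ! j))\<^sup>2 \<le> (2 ^ (k + 1) * ?h c)\<^sup>2"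
    by (rule power_mono) (rule enorm_nonneg)
  also have "\<dots> = 4 ^ (k + 1) * (?h c)\<^sup>2"
    by (simp add: power_mult_distrib power2_eq_square flip: power_mult_distrib)
  finally have "gram_det d ?R * (?h (S ! j))\<^sup>2 \<le> 4 ^ (k + 1) * (gram_det d ?R * (?h c)\<^sup>2)"
    using gram_det_nonneg[OF R] by (simp add: mult_left_mono mult.left_commute)
  then have "gram_det d S \<le> 4 ^ (k + 1) * gram_det d (S[j := c])"
    using gram_det_update[OF S(1) _ carr(1), of j] gram_det_update[OF S(1) _ carr(2), of j] S(2) j
    by simp
  then show ?thesis using that c(1) by blast
qed

definition greedy_cover :: "nat \<Rightarrow> nat \<Rightarrow> real vec set \<Rightarrow> real vec set \<Rightarrow> bool" where
  "greedy_cover d k U V \<longleftrightarrow>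
     (\<forall>x\<in>U. \<exists>P cs. P \<subseteq> carrier_vec d \<and> x \<in> P \<and> cs \<in> greedy_runs d P k \<and> set cs \<subseteq> V)"

lemma greedy_exchange_prefix:
  assumes cover: "greedy_cover d k U V"
  shows "n \<le> k \<Longrightarrow> length S = k \<Longrightarrow> set S \<subseteq> carrier_vec d \<Longrightarrow>
    \<forall>i<n. S ! i \<in> U \<Longrightarrow> \<forall>i<k. n \<le> i \<longrightarrow> S ! i \<in> V \<Longrightarrow>
    \<exists>T. length T = k \<and> set T \<subseteq> V \<and> gram_det d S \<le> (4 ^ (k + 1)) ^ n * gram_det d T"
proof (induction n arbitrary: S)
  case 0
  then have "set S \<subseteq> V" by (auto simp: in_set_conv_nth)
  with 0 show ?case by (intro exI[of _ S]) simp
next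
  case (Suc n)
  have "S ! n \<in> U" using Suc.prems(4) by simp
  then obtain P cs where P: "P \<subseteq> carrier_vec d" "S ! n \<in> P" "cs \<in> greedy_runs d P k" "set cs \<subseteq> V"
    using cover unfolding greedy_cover_def by meson
  have "n < k" using Suc.prems(1) by simp
  then obtain c where c: "c \<in> set cs" "gram_det d S \<le> 4 ^ (k + 1) * gram_det d (S[n := c])"
    using greedy_exchange[OF P(1,3) Suc.prems(3,2) _ P(2)] by blast
  have "c \<in> carrier_vec d" using c(1) greedy_runs_length_set[OF P(3)] P(1) by auto
  then have "set (S[n := c]) \<subseteq> carrier_vec d" using Suc.prems(3) by (intro set_update_subsetI)
  moreover have "\<forall>i<n. S[n := c] ! i \<in> U" using Suc.prems(4) by simp
  moreover have "\<forall>i<k. n \<le> i \<longrightarrow> S[n := c] ! i \<in> V"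
    using Suc.prems(2,5) c(1) P(4) by (auto simp: nth_list_update)
  ultimately obtain T where T: "length T = k" "set T \<subseteq> V"
      "gram_det d (S[n := c]) \<le> (4 ^ (k + 1)) ^ n * gram_det d T"
    using Suc.IH[of "S[n := c]"] Suc.prems(1,2) by fastforce
  have "gram_det d S \<le> 4 ^ (k + 1) * gram_det d (S[n := c])" by (rule c(2))
  also have "\<dots> \<le> 4 ^ (k + 1) * ((4 ^ (k + 1)) ^ n * gram_det d T)"
    using T(3) by (intro mult_left_mono) auto
  finally show ?case using T(1,2) by (intro exI[of _ T]) (simp add: mult.assoc)
qed

lemma finite_gram_dets:
  "finite X \<Longrightarrow> finite {gram_det d vs |vs. distinct vs \<and> set vs \<subseteq> X \<and> length vs = k}"
  using finite_lists_length_eq[of X k] by (auto intro: finite_subset[rotated])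

lemma gram_det_le_maxdet:
  assumes "finite X" "distinct vs" "set vs \<subseteq> X" "length vs = k"
  shows "gram_det d vs \<le> maxdet d k X"
  unfolding maxdet_def using assms by (auto intro!: Max_ge finite_gram_dets)

lemma maxdet_cases:
  assumes "finite X"
  obtains "maxdet d k X = 0"
  | vs where "distinct vs" "set vs \<subseteq> X" "length vs = k" "maxdet d k X = gram_det d vs"
proof (cases "\<exists>vs. distinct vs \<and> set vs \<subseteq> X \<and> length vs = k")
  case True
  then have "maxdet d k X \<in> {gram_det d vs |vs. distinct vs \<and> set vs \<subseteq> X \<and> length vs = k}"
    unfolding maxdet_def using Max_in[OF finite_gram_dets[OF assms]] by auto
  then show ?thesis using that(2) by blast
next
  case False
  then have "maxdet d k X = 0" unfolding maxdet_def by (simp only: if_not_P[OF False] if_False)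
  then show ?thesis by (rule that(1))
qed

lemma maxdet_nonneg:
  assumes "finite X" "X \<subseteq> carrier_vec d"
  shows "0 \<le> maxdet d k X"
  by (rule maxdet_cases[OF assms(1), where d = d and k = k]) (use assms gram_det_nonneg in auto)

theorem maxdet_le_of_greedy_cover:
  assumes U: "finite U" "U \<subseteq> carrier_vec d" and V: "finite V" "V \<subseteq> carrier_vec d"
    and cover: "greedy_cover d k U V"
  shows "maxdet d k U \<le> (4 ^ (k + 1)) ^ k * maxdet d k V"
proof (cases rule: maxdet_cases[OF U(1), where d = d and k = k])
  case 1
  then show ?thesis using maxdet_nonneg[OF V] by simp
next
  case (2 S)
  then obtain T where T: "length T = k" "set T \<subseteq> V" "gram_det d S \<le> (4 ^ (k + 1)) ^ k * gram_det d T"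
    using greedy_exchange_prefix[OF cover, of k S] U(2) by (auto simp: nth_mem subset_iff)
  have "gram_det d T \<le> maxdet d k V"
  proof (cases "0 < gram_det d T")
    case True
    have "set T \<subseteq> carrier_vec d" using T(2) V(2) by auto
    then have "distinct T" using True by (rule distinct_if_gram_det_pos)
    then show ?thesis by (rule gram_det_le_maxdet[OF V(1) _ T(2,1)])
  qed (use maxdet_nonneg[OF V, of k] in linarith)
  then have "(4 ^ (k + 1)) ^ k * gram_det d T \<le> (4 ^ (k + 1)) ^ k * maxdet d k V"
    by (intro mult_left_mono) auto
  then show ?thesis using T(3) 2(4) by linarith
qed

lemma card_greedy_output_le: "C \<in> greedy_outputs d k P \<Longrightarrow> card C \<le> k"
  unfolding greedy_outputs_def using greedy_runs_length_set card_length by fastforce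

lemma four_power_le_sixteen_power: "((4::real) ^ (k + 1)) ^ k \<le> 16 ^ (k\<^sup>2)"
proof -
  have "((4::real) ^ (k + 1)) ^ k = 4 ^ ((k + 1) * k)" by (rule power_mult[symmetric])
  also have "\<dots> \<le> 4 ^ (2 * k\<^sup>2)" by (rule power_increasing) (auto simp: power2_eq_square)
  also have "\<dots> = 16 ^ (k\<^sup>2)" by (simp add: power_mult)
  finally show ?thesis .
qed

lemma greedy_cover_UN:
  fixes m :: nat
  assumes Ps: "\<forall>i<m. finite (Ps i) \<and> Ps i \<subseteq> carrier_vec d"
    and greedy: "\<And>P. finite P \<Longrightarrow> P \<subseteq> carrier_vec d \<Longrightarrow> P \<noteq> {} \<Longrightarrow> c P \<in> greedy_outputs d k P"
  shows "greedy_cover d k (\<Union>i<m. Ps i) (\<Union>i<m. c (Ps i))"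
  unfolding greedy_cover_def
proof
  fix x assume "x \<in> (\<Union>i<m. Ps i)"
  then obtain i where i: "i < m" "x \<in> Ps i" by blast
  then have "c (Ps i) \<in> greedy_outputs d k (Ps i)" using Ps by (intro greedy) auto
  then obtain cs where "cs \<in> greedy_runs d (Ps i) k" "set cs = c (Ps i)"
    unfolding greedy_outputs_def by auto
  then show "\<exists>P cs. P \<subseteq> carrier_vec d \<and> x \<in> P \<and> cs \<in> greedy_runs d P k \<and>
      set cs \<subseteq> (\<Union>i<m. c (Ps i))"
    using i Ps by (intro exI[of _ "Ps i"] exI[of _ cs]) auto
qed

theorem maxdet_UN_le_maxdet_UN_greedy:
  fixes m :: nat
  assumes sub: "\<And>P. c P \<subseteq> P"
    and greedy: "\<And>P. finite P \<Longrightarrow> P \<subseteq> carrier_vec d \<Longrightarrow> P \<noteq> {} \<Longrightarrow> c P \<in> greedy_outputs d k P"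
    and Ps: "\<forall>i<m. finite (Ps i) \<and> Ps i \<subseteq> carrier_vec d"
  shows "maxdet d k (\<Union>i<m. Ps i) \<le> 16 ^ k\<^sup>2 * maxdet d k (\<Union>i<m. c (Ps i))"
proof -
  let ?U = "\<Union>i<m. Ps i" and ?V = "\<Union>i<m. c (Ps i)"
  have U: "finite ?U" "?U \<subseteq> carrier_vec d" using Ps by auto
  have "?V \<subseteq> ?U" by (intro UN_mono) (use sub in auto)
  then have V: "finite ?V" "?V \<subseteq> carrier_vec d" using finite_subset U by blast+
  have "maxdet d k ?U \<le> (4 ^ (k + 1)) ^ k * maxdet d k ?V"
    by (rule maxdet_le_of_greedy_cover[OF U V greedy_cover_UN[OF Ps greedy]])
  also have "\<dots> \<le> 16 ^ k\<^sup>2 * maxdet d k ?V"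
    by (intro mult_right_mono four_power_le_sixteen_power maxdet_nonneg[OF V])
  finally show ?thesis .
qed

theorem theorem1p1:
  shows "\<exists>A C :: real. A > 0 \<and> C > 0 \<and>
    (\<forall>d k :: nat. 1 \<le> k \<and> k \<le> d \<longrightarrow>
      (\<forall>c :: real vec set \<Rightarrow> real vec set.
        (\<forall>P. c P \<subseteq> P) \<and>
        (\<forall>P. finite P \<and> P \<subseteq> carrier_vec d \<and> P \<noteq> {} \<longrightarrow> c P \<in> greedy_outputs d k P)
        \<longrightarrow>
        (\<forall>P. finite P \<and> P \<subseteq> carrier_vec d \<longrightarrow> card (c P) \<le> k) \<and>
        (\<forall>(m :: nat) (Ps :: nat \<Rightarrow> real vec set).
           1 \<le> m \<and> (\<forall>i<m. finite (Ps i) \<and> Ps i \<subseteq> carrier_vec d) \<longrightarrow>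
           maxdet d k (\<Union>i<m. c (Ps i)) \<ge> maxdet d k (\<Union>i<m. Ps i) / (A * C ^ (k ^ 2)))))"
proof (rule exI[of _ 1], rule exI[of _ 16], intro conjI allI impI; (elim conjE)?)
  fix d k :: nat and c :: "real vec set \<Rightarrow> real vec set"
  assume sub: "\<forall>P. c P \<subseteq> P"
    and greedy: "\<forall>P. finite P \<and> P \<subseteq> carrier_vec d \<and> P \<noteq> {} \<longrightarrow> c P \<in> greedy_outputs d k P"
  have greedy_output: "c P \<in> greedy_outputs d k P"
    if "finite P" "P \<subseteq> carrier_vec d" "P \<noteq> {}" for P
    using greedy[rule_format, of P] that by simp
  show "card (c P) \<le> k" if "finite P" "P \<subseteq> carrier_vec d" for P
  proof (cases "P = {}")
    case True
    then show ?thesis using sub[rule_format, of P] by simp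
  next
    case False
    with that show ?thesis by (intro card_greedy_output_le[of "c P" d k P] greedy_output) auto
  qed
  fix m and Ps :: "nat \<Rightarrow> real vec set"
  assume "\<forall>i<m. finite (Ps i) \<and> Ps i \<subseteq> carrier_vec d"
  then have "maxdet d k (\<Union>i<m. Ps i) \<le> 16 ^ k\<^sup>2 * maxdet d k (\<Union>i<m. c (Ps i))"
    using sub greedy_output by (intro maxdet_UN_le_maxdet_UN_greedy) auto
  then show "maxdet d k (\<Union>i<m. c (Ps i)) \<ge> maxdet d k (\<Union>i<m. Ps i) / (1 * 16 ^ k\<^sup>2)"
    by (simp add: pos_divide_le_eq mult.commute)
qed simp_all

end
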